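(* Let $a,b,d<0$ and $c>0$ be real numbers with $c\le c^-$, and let $\{W_n(z)\}_{n\ge0}$ be the normalised sequence defined below. Then for every $n\ge1$ the polynomial $W_n(z)$ is real-rooted, and \[ |R_n^{J_1}|=\lfloor (n-1)/2\rfloor,\qquad |R_n^{J_2\cup J_3}|=\lfloor n/2\rfloor,\qquad |R_n^{J_4}|=1 . \] Moreover, \[ |R_n^{J_3}|=\begin{cases}1,&\text{if }\Delta_\Delta>\Delta_g\text{ and }n\ge n^+,\\ 0,&\text{otherwise.}\end{cases} \]
   Context: Let $a,b,c,d\in\mathbb{R}$ with $ac\ne0$, and put $A(z)=az+b$, $B(z)=cz+d$. The normalised sequence $\{W_n(z)\}_{n\ge0}$ is defined by $W_0(z)=1$, $W_1(z)=z$ and $W_n(z)=A(z)W_{n-1}(z)+B(z)W_{n-2}(z)$ for $n\ge2$; $W_n$ has degree $n$ with leading coefficient $a^{n-1}$. Notation (for $a,b,d<0<c$): - $\Delta_\Delta=-a^2d+abc+c^2$ (which is $>0$), and $x_\Delta^\pm=\dfrac{-ab-2c\pm2\sqrt{\Delta_\Delta}}{a^2}$ are the zeros of $\Delta(z)=A(z)^2+4B(z)=a^2z^2+(2ab+4c)z+(b^2+4d)$. - $g(z)=(1-a)z^2-(b+c)z-d$, $\Delta_g=(b+c)^2+4d(1-a)$, and $x_g^\pm=\dfrac{b+c\pm\sqrt{\Delta_g}}{2(1-a)}$ are the zeros of $g$. - $c^\pm=\pm2\sqrt{d(a-1)}-b$; then $x_g^\pm$ are real iff $c\le c^-$ or $c\ge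 c^+$. - $x_A=-b/a$, $x_B=-d/c$, $h(z)=(2-a)z-b$, and $n^+=-A(x_\Delta^+)/h(x_\Delta^+)$ (defined whenever $h(x_\Delta^+)\ne0$, which is the case when $\Delta_\Delta\neq\Delta_g$). - $J_1=(x_\Delta^-,x_A)$, $J_2=(x_A,x_\Delta^+)$, $J_3=[x_\Delta^+,x_g^-)$, $J_4=(x_g^+,0]$. - $R_n$ denotes the multiset of zeros of $W_n(z)$ (with multiplicity), and for an interval $J$, $R_n^J=R_n\cap J$; $|\cdot|$ is cardinality counted with multiplicity. A polynomial is real-rooted if all its zeros are real. *)

theory Defs
  imports "HOL-Computational_Algebra.Polynomial" Complex_Main
begin

text \<open>The normalised sequence: W_0 = 1, W_1 = z, W_n = A W_{n-1} + B W_{n-2},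
  with A(z) = a z + b and B(z) = c z + d.\<close>
fun W :: "real \<Rightarrow> real \<Rightarrow> real \<Rightarrow> real \<Rightarrow> nat \<Rightarrow> real poly" where
  "W a b c d 0 = 1"
| "W a b c d (Suc 0) = [:0, 1:]"
| "W a b c d (Suc (Suc n)) = [:b, a:] * W a b c d (Suc n) + [:d, c:] * W a b c d n"

definition real_rooted :: "real poly \<Rightarrow> bool" where
  "real_rooted p \<longleftrightarrow> (\<forall>z::complex. poly (map_poly of_real p) z = 0 \<longrightarrow> z \<in> \<real>)"

definition nroots_in :: "real poly \<Rightarrow> real set \<Rightarrow> nat" where
  "nroots_in p J = (\<Sum>x\<in>{x\<in>J. poly p x = 0}. order x p)"

definition DeltaDelta :: "real \<Rightarrow> real \<Rightarrow> real \<Rightarrow> real \<Rightarrow> real" where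
  "DeltaDelta a b c d = - (a ^ 2) * d + a * b * c + c ^ 2"

definition xDelta_plus :: "real \<Rightarrow> real \<Rightarrow> real \<Rightarrow> real \<Rightarrow> real" where
  "xDelta_plus a b c d = (- a * b - 2 * c + 2 * sqrt (DeltaDelta a b c d)) / (a ^ 2)"

definition xDelta_minus :: "real \<Rightarrow> real \<Rightarrow> real \<Rightarrow> real \<Rightarrow> real" where
  "xDelta_minus a b c d = (- a * b - 2 * c - 2 * sqrt (DeltaDelta a b c d)) / (a ^ 2)"

definition Delta_g :: "real \<Rightarrow> real \<Rightarrow> real \<Rightarrow> real \<Rightarrow> real" where
  "Delta_g a b c d = (b + c)^2 + 4 * d * (1 - a)"

definition xg_plus :: "real \<Rightarrow> real \<Rightarrow> real \<Rightarrow> real \<Rightarrow> real" where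
  "xg_plus a b c d = (b + c + sqrt (Delta_g a b c d)) / (2 * (1 - a))"

definition xg_minus :: "real \<Rightarrow> real \<Rightarrow> real \<Rightarrow> real \<Rightarrow> real" where
  "xg_minus a b c d = (b + c - sqrt (Delta_g a b c d)) / (2 * (1 - a))"

definition c_minus :: "real \<Rightarrow> real \<Rightarrow> real \<Rightarrow> real" where
  "c_minus a b d = - 2 * sqrt (d * (a - 1)) - b"

definition x_A :: "real \<Rightarrow> real \<Rightarrow> real" where
  "x_A a b = - b / a"

definition n_plus :: "real \<Rightarrow> real \<Rightarrow> real \<Rightarrow> real \<Rightarrow> real" where
  "n_plus a b c d =
     (let x = xDelta_plus a b c d in - (a * x + b) / ((2 - a) * x - b))"

end

theory Submission
  imports Defs
begin

text \<open>
  For \<open>x \<le> x\<^sub>\<Delta>\<^sup>+\<close> we have \<open>B(x) < 0\<close>; writing \<open>\<rho>\<^sup>2 = -B(x)\<close> and \<open>A(x) = 2\<rho> cos t\<close>, the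
  recurrence has the Chebyshev-type solution
  \<open>\<rho> sin t W\<^sub>n(x) = \<rho>\<^sup>n\<^sup>+\<^sup>1 sin((n+1)t) + (x - A(x)) \<rho>\<^sup>n sin(nt)\<close>,
  so \<open>W\<^sub>n(x) = (-1)\<^sup>j \<rho>\<^sup>n\<close> wherever \<open>t = j\<pi>/n\<close>. Such points exist in \<open>J\<^sub>1\<close> for
  \<open>1 \<le> j < \<lceil>n/2\<rceil>\<close> and in \<open>J\<^sub>2\<close> for \<open>\<lceil>n/2\<rceil> < j < n\<close>; together with \<open>x\<^sub>A\<close> (where
  \<open>W\<^sub>n\<close> is explicit because \<open>A\<close> vanishes) and the zero \<open>x\<^sub>g\<^sup>-\<close> of \<open>g\<close> (where \<open>W\<^sub>n(x) = x\<^sup>n\<close>)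
  they form \<open>n\<close> increasing points at which \<open>W\<^sub>n\<close> alternates in sign. This gives \<open>n - 1\<close>
  interlacing zeros, and one more lies in \<open>(x\<^sub>g\<^sup>+, 0)\<close> because \<open>W\<^sub>n(0)\<close> and \<open>W\<^sub>n(x\<^sub>g\<^sup>+)\<close>
  have opposite signs. Since \<open>deg W\<^sub>n = n\<close>, these are all the zeros and all are simple.
  The zero between the last two points lies in \<open>J\<^sub>3\<close> iff \<open>W\<^sub>n\<close> has not changed sign at
  \<open>x\<^sub>\<Delta>\<^sup>+\<close>; there \<open>A\<^sup>2 + 4B\<close> vanishes, so \<open>W\<^sub>n\<close> has a closed form whose sign is that of
  \<open>A(x\<^sub>\<Delta>\<^sup>+) + n h(x\<^sub>\<Delta>\<^sup>+)\<close>, and this changes sign at \<open>n = n\<^sup>+\<close>.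
\<close>

section \<open>Polynomials with as many real zeros as their degree\<close>

lemma roots_eq_and_simple_if_card_eq_degree:
  fixes p :: "'a::idom poly"
  assumes "p \<noteq> 0" "finite S" "card S = degree p" "\<And>x. x \<in> S \<Longrightarrow> poly p x = 0"
  shows "{x. poly p x = 0} = S" "\<And>x. x \<in> S \<Longrightarrow> order x p = 1"
proof -
  define Z where "Z = {x. poly p x = 0}"
  have "finite Z" using assms(1) by (simp add: Z_def poly_roots_finite)
  have "S \<subseteq> Z" using assms(4) by (auto simp: Z_def)
  have order_pos: "order x p \<ge> 1" if "x \<in> Z" for x
    using that assms(1) order_root[of p x] by (simp add: Z_def)
  have "card S \<le> card Z"
    using \<open>finite Z\<close> \<open>S \<subseteq> Z\<close> by (rule card_mono)
  moreover have "card Z \<le> (\<Sum>x\<in>Z. order x p)"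
    using sum_mono[of Z "\<lambda>_. 1::nat" "\<lambda>x. order x p"] order_pos by simp
  moreover have "(\<Sum>x\<in>Z. order x p) \<le> card S"
    using sum_order_le_degree[OF assms(1)] assms(3) by (simp add: Z_def)
  ultimately have card_eq: "card S = card Z" and sum_eq: "(\<Sum>x\<in>Z. order x p) = (\<Sum>x\<in>Z. 1)"
    by simp_all
  show "{x. poly p x = 0} = S"
    using card_subset_eq[OF \<open>finite Z\<close> \<open>S \<subseteq> Z\<close> card_eq] by (simp add: Z_def)
  show "order x p = 1" if "x \<in> S" for x
  proof (rule ccontr)
    assume "order x p \<noteq> 1"
    then have "(\<Sum>x\<in>Z. 1) < (\<Sum>x\<in>Z. order x p)"
      using order_pos \<open>finite Z\<close> \<open>S \<subseteq> Z\<close> that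
      by (intro sum_strict_mono_ex1) (auto intro!: bexI[of _ x] simp: le_neq_implies_less)
    then show False using sum_eq by simp
  qed
qed

lemma nroots_in_eq_card_inter:
  fixes p :: "real poly"
  assumes "p \<noteq> 0" "finite S" "card S = degree p" "\<And>x. x \<in> S \<Longrightarrow> poly p x = 0"
  shows "nroots_in p J = card (S \<inter> J)"
proof -
  have "{x \<in> J. poly p x = 0} = S \<inter> J"
    using roots_eq_and_simple_if_card_eq_degree(1)[OF assms] by auto
  then show ?thesis
    using roots_eq_and_simple_if_card_eq_degree(2)[OF assms] by (simp add: nroots_in_def)
qed

lemma poly_map_poly_of_real:
  "poly (map_poly of_real p) (of_real x :: 'a::{real_algebra_1,comm_semiring_1}) = of_real (poly p x)"
  by (induction p) (auto simp: map_poly_pCons)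

lemma real_rooted_if_card_eq_degree:
  fixes p :: "real poly"
  assumes "p \<noteq> 0" "finite S" "card S = degree p" "\<And>x. x \<in> S \<Longrightarrow> poly p x = 0"
  shows "real_rooted p"
proof -
  define q :: "complex poly" where "q = map_poly of_real p"
  have "q \<noteq> 0" "degree q = degree p"
    using assms(1) by (simp_all add: q_def map_poly_eq_0_iff degree_map_poly)
  moreover have "card (of_real ` S :: complex set) = card S"
    by (intro card_image inj_onI) simp
  ultimately have "{z. poly q z = 0} = of_real ` S"
    using assms by (intro roots_eq_and_simple_if_card_eq_degree(1))
      (auto simp: q_def poly_map_poly_of_real)
  then have "poly q z = 0 \<Longrightarrow> z \<in> \<real>" for z
    by (metis (mono_tags) Reals_of_real image_iff mem_Collect_eq)
  then show ?thesis
    unfolding real_rooted_def q_def[symmetric] by blast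
qed

lemma nroots_in_eq_card_preimage:
  fixes p :: "real poly"
  assumes "p \<noteq> 0" "inj_on R I" "finite I" "card I = degree p" "\<And>i. i \<in> I \<Longrightarrow> poly p (R i) = 0"
  shows "nroots_in p J = card {i \<in> I. R i \<in> J}"
proof -
  have "nroots_in p J = card (R ` I \<inter> J)"
    using assms by (intro nroots_in_eq_card_inter) (auto simp: card_image)
  also have "R ` I \<inter> J = R ` {i \<in> I. R i \<in> J}"
    by auto
  also have "card \<dots> = card {i \<in> I. R i \<in> J}"
    by (intro card_image inj_on_subset[OF assms(2)]) auto
  finally show ?thesis .
qed

section \<open>Sign changes of continuous functions\<close>

lemma zero_between_opposite_signs:
  fixes f :: "real \<Rightarrow> real"
  assumes "l < h" "continuous_on {l..h} f" "0 < s * f l" "s * f h < 0"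
  obtains x where "l < x" "x < h" "f x = 0"
proof -
  have "continuous_on {l..h} (\<lambda>x. s * f x)"
    using assms(2) by (intro continuous_intros)
  then obtain x where "l \<le> x" "x \<le> h" "s * f x = 0"
    using IVT2'[of "\<lambda>x. s * f x" h 0 l] assms by auto
  moreover have "s \<noteq> 0" using assms(3) by auto
  ultimately show ?thesis
    using that assms(3,4) by (metis less_irrefl mult_eq_0_iff order_le_less)
qed

lemma less_unique_zero_iff_sign:
  fixes f :: "real \<Rightarrow> real"
  assumes cont: "continuous_on {l..h} f" and "0 < s * f l" "s * f h < 0"
    and unique: "\<And>y. l < y \<Longrightarrow> y < h \<Longrightarrow> f y = 0 \<Longrightarrow> y = z"
    and "l \<le> x" "x \<le> h"
  shows "z < x \<longleftrightarrow> s * f x < 0"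
proof
  assume "z < x"
  show "s * f x < 0"
  proof (rule ccontr)
    assume "\<not> s * f x < 0"
    then have "x < h" using assms(3) \<open>x \<le> h\<close> by (cases "x = h") auto
    show False
    proof (cases "f x = 0")
      case True
      then have "l < x" using assms(2,5) by (cases "x = l") auto
      then show False using unique[OF _ \<open>x < h\<close> True] \<open>z < x\<close> by simp
    next
      case False
      then have "0 < s * f x" using \<open>\<not> s * f x < 0\<close> assms(2)
        by (metis linorder_neqE_linordered_idom mult_eq_0_iff mult_zero_left)
      moreover have "continuous_on {x..h} f"
        by (rule continuous_on_subset[OF cont]) (use \<open>l \<le> x\<close> in auto)
      ultimately obtain y where "x < y" "y < h" "f y = 0"
        using zero_between_opposite_signs[OF \<open>x < h\<close>] assms(3) by blast
      then show False using unique[of y] \<open>l \<le> x\<close> \<open>z < x\<close> by simp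
    qed
  qed
next
  assume "s * f x < 0"
  then have "l < x" using assms(2,5) by (cases "x = l") auto
  moreover have "continuous_on {l..x} f"
    by (rule continuous_on_subset[OF cont]) (use \<open>x \<le> h\<close> in auto)
  ultimately obtain y where "l < y" "y < x" "f y = 0"
    using zero_between_opposite_signs assms(2) \<open>s * f x < 0\<close> by blast
  then show "z < x" using unique[of y] \<open>x \<le> h\<close> by simp
qed

text \<open>The zeros of \<open>F k\<close> need not be unique, so they are chosen one at a time, each to
  the right of the previous one.\<close>

lemma ascending_zeros:
  fixes F :: "nat \<Rightarrow> real \<Rightarrow> real"
  assumes "L < R"
    and cont: "\<And>k. continuous_on {L..R} (F k)"
    and left: "\<And>k. lo \<le> k \<Longrightarrow> k < hi \<Longrightarrow> 0 < F k L"
    and right: "\<And>k. lo \<le> k \<Longrightarrow> k < hi \<Longrightarrow> F k R < 0"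
    and step: "\<And>k x. lo \<le> k \<Longrightarrow> Suc k < hi \<Longrightarrow> L < x \<Longrightarrow> x < R \<Longrightarrow> F k x = 0 \<Longrightarrow> 0 < F (Suc k) x"
  obtains p where "\<And>k. lo \<le> k \<Longrightarrow> k < hi \<Longrightarrow> L < p k \<and> p k < R \<and> F k (p k) = 0"
    and "\<And>k. lo \<le> k \<Longrightarrow> Suc k < hi \<Longrightarrow> p k < p (Suc k)"
proof -
  have "\<exists>p. (\<forall>k. lo \<le> k \<and> k < m \<longrightarrow> L < p k \<and> p k < R \<and> F k (p k) = 0)
          \<and> (\<forall>k. lo \<le> k \<and> Suc k < m \<longrightarrow> p k < p (Suc k))" if "m \<le> hi" for m
    using that
  proof (induction m)
    case 0
    show ?case by simp
  next
    case (Suc m)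
    then obtain p where p_zero: "\<forall>k. lo \<le> k \<and> k < m \<longrightarrow> L < p k \<and> p k < R \<and> F k (p k) = 0"
      and p_less: "\<forall>k. lo \<le> k \<and> Suc k < m \<longrightarrow> p k < p (Suc k)"
      by auto
    show ?case
    proof (cases "lo \<le> m")
      case False
      then show ?thesis by (intro exI[of _ p]) auto
    next
      case True
      define l where "l = (if m = lo then L else p (m - 1))"
      have "L \<le> l \<and> l < R \<and> 0 < F m l"
      proof (cases "m = lo")
        case False
        then have "L < p (m - 1) \<and> p (m - 1) < R \<and> F (m - 1) (p (m - 1)) = 0"
          using p_zero True by simp
        then show ?thesis
          using False True Suc.prems step[of "m - 1" "p (m - 1)"] by (simp add: l_def)
      qed (use left[of m] Suc.prems \<open>L < R\<close> in \<open>simp add: l_def\<close>)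
      then have "L \<le> l" "l < R" "0 < F m l" by simp_all
      moreover have "continuous_on {l..R} (F m)"
        by (rule continuous_on_subset[OF cont]) (use \<open>L \<le> l\<close> in auto)
      ultimately obtain y where y: "l < y" "y < R" "F m y = 0"
        using zero_between_opposite_signs[of l R "F m" 1] right[of m] True Suc.prems by auto
      have "p (m - 1) < y" if "lo \<le> m - 1" "m \<noteq> lo"
        using y that by (simp add: l_def)
      then show ?thesis
        using p_zero p_less y \<open>L \<le> l\<close> True
        by (intro exI[of _ "p(m := y)"]) (auto simp: less_Suc_eq)
    qed
  qed
  then show ?thesis using that by blast
qed

lemma zeros_between_alternating_signs:
  fixes p :: "real poly" and P :: "nat \<Rightarrow> real"
  assumes "\<And>j. 1 \<le> j \<Longrightarrow> j < n \<Longrightarrow> P j < P (Suc j)"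
    and "\<And>j. 1 \<le> j \<Longrightarrow> j \<le> n \<Longrightarrow> 0 < (-1)^j * poly p (P j)"
  obtains R where "\<And>j. 1 \<le> j \<Longrightarrow> j < n \<Longrightarrow> P j < R j \<and> R j < P (Suc j) \<and> poly p (R j) = 0"
proof -
  have "\<exists>y. P j < y \<and> y < P (Suc j) \<and> poly p y = 0" if "1 \<le> j" "j < n" for j
  proof -
    have "0 < (-1)^j * poly p (P j)" "(-1)^j * poly p (P (Suc j)) < 0"
      using assms(2)[of j] assms(2)[of "Suc j"] that by auto
    moreover have "continuous_on {P j..P (Suc j)} (poly p)"
      by (intro continuous_intros)
    ultimately show ?thesis
      using zero_between_opposite_signs[OF assms(1)] that by metis
  qed
  then show ?thesis using that by metis
qed

lemma interlaced_roots:
  fixes p :: "real poly" and P :: "nat \<Rightarrow> real"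
  assumes "1 \<le> n" "degree p = n"
    and P_less: "\<And>j. 1 \<le> j \<Longrightarrow> j < n \<Longrightarrow> P j < P (Suc j)"
    and sign: "\<And>j. 1 \<le> j \<Longrightarrow> j \<le> n \<Longrightarrow> 0 < (-1)^j * poly p (P j)"
    and "P n < r" "poly p r = 0"
  obtains R where "\<And>j. 1 \<le> j \<Longrightarrow> j < n \<Longrightarrow> P j < R j \<and> R j < P (Suc j)"
    and "R n = r"
    and "\<And>J. nroots_in p J = card {j \<in> {1..n}. R j \<in> J}"
    and "real_rooted p"
    and "\<And>j x. 1 \<le> j \<Longrightarrow> j < n \<Longrightarrow> P j \<le> x \<Longrightarrow> x \<le> P (Suc j) \<Longrightarrow>
      R j < x \<longleftrightarrow> (-1)^j * poly p x < 0"
proof -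
  have "p \<noteq> 0" using sign[of 1] \<open>1 \<le> n\<close> by auto
  obtain R0 where R0: "\<And>j. 1 \<le> j \<Longrightarrow> j < n \<Longrightarrow> P j < R0 j \<and> R0 j < P (Suc j) \<and> poly p (R0 j) = 0"
    using zeros_between_alternating_signs[of n P p, OF P_less sign] by blast
  define R where "R j = (if j = n then r else R0 j)" for j
  have R_between: "P j < R j \<and> R j < P (Suc j)" if "1 \<le> j" "j < n" for j
    using R0 that by (simp add: R_def)
  have roots: "poly p (R j) = 0" if "j \<in> {1..n}" for j
    using R0[of j] \<open>poly p r = 0\<close> that by (auto simp: R_def)
  have P_less_R: "P j < R j" if "1 \<le> j" "j \<le> n" for j
    using R_between[of j] \<open>P n < r\<close> that by (cases "j = n") (auto simp: R_def)
  have P_mono: "P i \<le> P j" if "1 \<le> i" "i \<le> j" "j \<le> n" for i j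
    by (rule lift_Suc_mono_le_ivl[where N = "{1..<n}"]) (use P_less that in \<open>auto simp: less_imp_le\<close>)
  have "strict_mono_on {1..n} R"
  proof (rule strict_mono_onI)
    fix i j assume "i \<in> {1..n}" "j \<in> {1..n}" "i < j"
    then have "R i < P (Suc i)" "P (Suc i) \<le> P j" "P j < R j"
      using R_between P_mono P_less_R by auto
    then show "R i < R j" by simp
  qed
  then have "inj_on R {1..n}" by (rule strict_mono_on_imp_inj_on)
  have "card {1..n} = degree p" using \<open>degree p = n\<close> by simp
  note roots_data = \<open>p \<noteq> 0\<close> \<open>inj_on R {1..n}\<close> finite_atLeastAtMost this roots
  have image_roots: "card (R ` {1..n}) = degree p" "\<And>x. x \<in> R ` {1..n} \<Longrightarrow> poly p x = 0"
    using roots_data by (auto simp: card_image)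
  have root_set: "{x. poly p x = 0} = R ` {1..n}"
    using roots_eq_and_simple_if_card_eq_degree(1)[OF \<open>p \<noteq> 0\<close> _ image_roots] by simp
  have unique: "y = R j" if y: "1 \<le> j" "j < n" "P j < y" "y < P (Suc j)" "poly p y = 0" for j y
  proof -
    obtain i where i: "i \<in> {1..n}" "y = R i" using root_set y(5) by blast
    have "\<not> i < j" using R_between[of i] P_mono[of "Suc i" j] i y by fastforce
    moreover have "\<not> j < i" using P_less_R[of i] P_mono[of "Suc j" i] i y by fastforce
    ultimately show ?thesis using i by simp
  qed
  show ?thesis
  proof
    show "P j < R j \<and> R j < P (Suc j)" if "1 \<le> j" "j < n" for j
      using R_between that .
    show "R n = r" by (simp add: R_def)
    show "nroots_in p J = card {j \<in> {1..n}. R j \<in> J}" for J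
      by (rule nroots_in_eq_card_preimage[OF roots_data])
    show "real_rooted p"
      using real_rooted_if_card_eq_degree[OF \<open>p \<noteq> 0\<close> _ image_roots] by simp
    show "R j < x \<longleftrightarrow> (-1)^j * poly p x < 0"
      if "1 \<le> j" "j < n" "P j \<le> x" "x \<le> P (Suc j)" for j x
    proof (rule less_unique_zero_iff_sign)
      show "continuous_on {P j..P (Suc j)} (poly p)" by (intro continuous_intros)
      show "0 < (-1)^j * poly p (P j)" "(-1)^j * poly p (P (Suc j)) < 0"
        using sign[of j] sign[of "Suc j"] that by auto
    qed (use unique that in auto)
  qed
qed

section \<open>Closed forms for the sequence \<open>W\<close>\<close>

lemma poly_W_Suc_Suc:
  "poly (W a b c d (Suc (Suc n))) x =
     (a*x + b) * poly (W a b c d (Suc n)) x + (c*x + d) * poly (W a b c d n) x"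
  by (simp add: algebra_simps)

lemma degree_W:
  assumes "a \<noteq> 0"
  shows "degree (W a b c d n) = n"
proof (induction n rule: induct_nat_012)
  case (ge2 n)
  then have "W a b c d (Suc n) \<noteq> 0" by auto
  then have "degree ([:b, a:] * W a b c d (Suc n)) = Suc (Suc n)"
    using ge2 assms by (subst degree_mult_eq) auto
  moreover have "degree ([:d, c:] * W a b c d n) < Suc (Suc n)"
  proof -
    have "degree [:d, c:] \<le> 1" by simp
    then show ?thesis using degree_mult_le[of "[:d, c:]" "W a b c d n"] ge2 by linarith
  qed
  ultimately show ?case by (simp add: degree_add_eq_left)
qed simp_all

lemma poly_W_eq_power:
  assumes "x^2 = (a*x + b) * x + (c*x + d)"
  shows "poly (W a b c d n) x = x^n"
proof (induction n rule: induct_nat_012)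
  case (ge2 n)
  have "poly (W a b c d (Suc (Suc n))) x = x^n * ((a*x + b) * x + (c*x + d))"
    by (simp only: poly_W_Suc_Suc ge2.IH) (simp add: algebra_simps)
  then show ?case by (simp add: assms[symmetric] power2_eq_square)
qed simp_all

lemma poly_W_at_zero_of_A:
  assumes "a*x + b = 0"
  shows "poly (W a b c d (2*k)) x = (c*x + d)^k \<and> poly (W a b c d (2*k + 1)) x = x * (c*x + d)^k"
proof (induction k)
  case (Suc k)
  have "poly (W a b c d (2 * Suc k)) x = (c*x + d)^Suc k"
    using poly_W_Suc_Suc[of a b c d "2*k" x] Suc assms by simp
  moreover have "poly (W a b c d (2 * Suc k + 1)) x = x * (c*x + d)^Suc k"
    using poly_W_Suc_Suc[of a b c d "2*k + 1" x] Suc assms by simp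
  ultimately show ?case by simp
qed simp

lemma poly_W_double_root:
  assumes "a*x + b = 2*u" "c*x + d = - (u^2)"
  shows "u * poly (W a b c d n) x = u^n * (u + n * (x - u))"
proof (induction n rule: induct_nat_012)
  case (ge2 n)
  have "u * poly (W a b c d (Suc (Suc n))) x =
      2*u * (u * poly (W a b c d (Suc n)) x) - u^2 * (u * poly (W a b c d n) x)"
    by (simp only: poly_W_Suc_Suc assms) (simp add: algebra_simps)
  then show ?case
    by (simp only: ge2.IH) (simp add: algebra_simps power2_eq_square)
qed (simp_all add: algebra_simps)

lemma poly_W_trig:
  assumes "\<rho>^2 = - (c*x + d)" "a*x + b = 2*\<rho>*cos t"
  shows "\<rho> * sin t * poly (W a b c d n) x =
     \<rho>^(n+1) * sin ((n+1)*t) + (x - (a*x + b)) * \<rho>^n * sin (n*t)"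
proof (induction n rule: induct_nat_012)
  case 1
  have "sin (2*t) = 2 * sin t * cos t" by (rule sin_double)
  then show ?case using assms(2) by (simp add: algebra_simps power2_eq_square)
next
  case (ge2 n)
  have B: "c*x + d = - (\<rho>^2)" using assms(1) by simp
  have cos_sin: "2 * cos t * sin (m*t + t) - sin (m*t) = sin (m*t + 2*t)" for m :: real
    using sin_times_cos[of "m*t + t" t] by (simp add: algebra_simps)
  have "\<rho> * sin t * poly (W a b c d (Suc (Suc n))) x =
     2*\<rho>*cos t * (\<rho> * sin t * poly (W a b c d (Suc n)) x) - \<rho>^2 * (\<rho> * sin t * poly (W a b c d n) x)"
    by (simp only: poly_W_Suc_Suc B assms(2)) (simp add: algebra_simps)
  also have "\<dots> = \<rho>^(n+3) * (2 * cos t * sin ((n+1)*t + t) - sin ((n+1)*t))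
      + (x - (a*x + b)) * \<rho>^(n+2) * (2 * cos t * sin (n*t + t) - sin (n*t))"
    unfolding ge2.IH assms(2)
    by (simp add: algebra_simps power2_eq_square power_add power3_eq_cube)
  also have "\<dots> = \<rho>^(n+3) * sin ((n+3)*t) + (x - (a*x + b)) * \<rho>^(n+2) * sin ((n+2)*t)"
    unfolding cos_sin by (simp add: algebra_simps)
  finally show ?case by (simp add: algebra_simps power_add power3_eq_cube)
qed simp

lemma second_order_recurrence_pos:
  fixes u :: "nat \<Rightarrow> real"
  assumes rec: "\<And>n. u (Suc (Suc n)) = p * u (Suc n) - q * u n"
    and "0 < p" "0 \<le> q" "4*q \<le> p^2" "p/2 * u 0 \<le> u 1" "0 < u 1"
  shows "0 < u (Suc n)"
proof -
  have "p/2 * u n \<le> u (Suc n) \<and> 0 < u (Suc n)" for n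
  proof (induction n)
    case (Suc n)
    then have "q * u n \<le> q * (2/p * u (Suc n))"
      using \<open>0 < p\<close> \<open>0 \<le> q\<close> by (intro mult_left_mono) (simp_all add: field_simps)
    moreover have "p/2 \<le> p - 2*q/p"
      using \<open>0 < p\<close> \<open>4*q \<le> p^2\<close> by (simp add: field_simps power2_eq_square)
    then have "p/2 * u (Suc n) \<le> (p - 2*q/p) * u (Suc n)"
      using Suc.IH by (intro mult_right_mono) simp_all
    ultimately have "p/2 * u (Suc n) \<le> u (Suc (Suc n))"
      using rec[of n] by (simp add: algebra_simps)
    moreover have "0 < p/2 * u (Suc n)" using Suc.IH \<open>0 < p\<close> by simp
    ultimately show ?case by simp
  qed (use assms in simp)
  then show ?thesis by simp
qed

lemma minus_one_power_mult_pred: "0 < n \<Longrightarrow> (-1::'a::ring_1)^n * y = - ((-1)^(n - 1) * y)"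
  by (cases n) simp_all

lemma sign_W_at_zero:
  assumes "b < 0" "d < 0" "0 \<le> b^2 + 4*d" "2 \<le> n"
  shows "(-1)^n * poly (W a b c d n) 0 < 0"
proof -
  define u where "u k = (-1)^k * poly (W a b c d (Suc k)) 0" for k
  have "0 < u (Suc (n - 2))"
    by (rule second_order_recurrence_pos[where p = "-b" and q = "-d"])
      (use assms in \<open>simp_all add: u_def algebra_simps\<close>)
  moreover have "(-1)^n * poly (W a b c d n) 0 = - ((-1)^(n - 1) * poly (W a b c d n) 0)"
    using \<open>2 \<le> n\<close> by (intro minus_one_power_mult_pred) simp
  ultimately show ?thesis using \<open>2 \<le> n\<close> by (simp add: u_def Suc_diff_Suc numeral_2_eq_2)
qed

lemma sign_W_at_angle:
  fixes j n :: nat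
  assumes "0 < \<rho>" "\<rho>^2 = - (c*x + d)" "a*x + b = 2*\<rho>*cos (j*pi/n)" "1 \<le> j" "j < n"
  shows "0 < (-1)^j * poly (W a b c d n) x"
proof -
  define t where "t = j*pi/n"
  have "0 < t" "t < pi" using assms(4,5) by (auto simp: t_def field_simps)
  then have "0 < sin t" by (rule sin_gt_zero)
  have "n * t = j * pi" using assms(5) by (simp add: t_def)
  then have "sin (n*t) = 0" "sin ((n+1)*t) = (-1)^j * sin t"
    by (simp_all add: distrib_right sin_add)
  then have "\<rho> * sin t * poly (W a b c d n) x = \<rho> * sin t * ((-1)^j * \<rho>^n)"
    using poly_W_trig[OF assms(2), where t = t and n = n] assms(3)
    by (simp add: t_def algebra_simps)
  then have "poly (W a b c d n) x = (-1)^j * \<rho>^n"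
    using \<open>0 < sin t\<close> \<open>0 < \<rho>\<close> by simp
  then show ?thesis using \<open>0 < \<rho>\<close> by simp
qed

lemma cos_multiple_pi_div_strict_decreasing:
  fixes i j n :: nat
  assumes "i < j" "j \<le> n"
  shows "cos (j*pi/n) < cos (i*pi/n)"
  using assms by (intro cos_monotone_0_pi) (auto simp: field_simps)

section \<open>The parameter range \<open>c \<le> c\<^sup>-\<close>\<close>

locale c_le_c_minus =
  fixes a b c d :: real
  assumes a_neg: "a < 0" and b_neg: "b < 0" and d_neg: "d < 0" and c_pos: "0 < c"
    and c_le: "c \<le> c_minus a b d"
begin

abbreviation "xm \<equiv> xDelta_minus a b c d"
abbreviation "xp \<equiv> xDelta_plus a b c d"
abbreviation "xA \<equiv> x_A a b"
abbreviation "gm \<equiv> xg_minus a b c d"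
abbreviation "gp \<equiv> xg_plus a b c d"

lemma c_squared_less_DeltaDelta: "c^2 < DeltaDelta a b c d"
proof -
  have "0 < - (a^2) * d" using a_neg d_neg by (simp add: mult_pos_neg)
  moreover have "0 < a*b*c" using a_neg b_neg c_pos by (simp add: mult_neg_neg)
  ultimately show ?thesis by (simp add: DeltaDelta_def)
qed

lemma c_less_sqrt_DeltaDelta: "c < sqrt (DeltaDelta a b c d)"
  using c_squared_less_DeltaDelta c_pos real_less_rsqrt by blast

lemma sqrt_DeltaDelta_squared: "sqrt (DeltaDelta a b c d) * sqrt (DeltaDelta a b c d) = DeltaDelta a b c d"
  using c_squared_less_DeltaDelta by (smt (verit) real_sqrt_mult_self zero_le_power2)

lemma Delta_factor: "(a*x + b)^2 + 4*(c*x + d) = a^2 * (x - xm) * (x - xp)"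
  using a_neg sqrt_DeltaDelta_squared
  by (simp add: xDelta_minus_def xDelta_plus_def DeltaDelta_def field_simps power2_eq_square)

lemma A_xp: "a*xp + b = 2 * (sqrt (DeltaDelta a b c d) - c) / a"
  using a_neg by (simp add: xDelta_plus_def field_simps power2_eq_square)

lemma A_xm: "a*xm + b = - 2 * (sqrt (DeltaDelta a b c d) + c) / a"
  using a_neg by (simp add: xDelta_minus_def field_simps power2_eq_square)

lemma A_xp_neg: "a*xp + b < 0"
  using A_xp a_neg c_less_sqrt_DeltaDelta by (simp add: divide_pos_neg)

lemma A_xm_pos: "0 < a*xm + b"
  using A_xm a_neg c_less_sqrt_DeltaDelta c_pos by (simp add: divide_neg_neg)

lemma Delta_xp: "(a*xp + b)^2 + 4*(c*xp + d) = 0"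
  using Delta_factor[of xp] by simp

lemma Delta_xm: "(a*xm + b)^2 + 4*(c*xm + d) = 0"
  using Delta_factor[of xm] by simp

lemma A_xA: "a*xA + b = 0"
  using a_neg by (simp add: x_A_def)

lemma xm_less_xA: "xm < xA"
  using A_xm_pos A_xA a_neg by (smt (verit) mult_less_cancel_left)

lemma xA_less_xp: "xA < xp"
  using A_xp_neg A_xA a_neg by (smt (verit) mult_less_cancel_left)

lemma B_neg: "x \<le> xp \<Longrightarrow> c*x + d < 0"
  using Delta_xp A_xp_neg c_pos by (smt (verit) mult_left_mono zero_less_power2)

lemma sqrt_neg_B_xp: "sqrt (- (c*xp + d)) = - (a*xp + b) / 2"
proof -
  have "- (c*xp + d) = (- (a*xp + b) / 2)^2"
    using Delta_xp by (simp add: power_divide power2_eq_square algebra_simps)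
  then show ?thesis using A_xp_neg by simp
qed

lemma sqrt_neg_B_xm: "sqrt (- (c*xm + d)) = (a*xm + b) / 2"
proof -
  have "- (c*xm + d) = ((a*xm + b) / 2)^2"
    using Delta_xm by (simp add: power_divide power2_eq_square algebra_simps)
  then show ?thesis using A_xm_pos by simp
qed

lemma b_plus_c_le: "b + c \<le> - 2 * sqrt (d*(a - 1))"
  using c_le by (simp add: c_minus_def)

lemma sqrt_d_a_minus_1_pos: "0 < sqrt (d*(a - 1))"
  using a_neg d_neg by (simp add: mult_neg_neg)

lemma b_squared_plus_4d_pos: "0 < b^2 + 4*d"
proof -
  have "2 * sqrt (d*(a - 1)) < - b" using b_plus_c_le c_pos by simp
  then have "(2 * sqrt (d*(a - 1)))^2 < (- b)^2"
    using sqrt_d_a_minus_1_pos by (intro power_strict_mono) simp_all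
  moreover have "(2 * sqrt (d*(a - 1)))^2 = 4 * (d*(a - 1))"
    using sqrt_d_a_minus_1_pos by (simp add: power_mult_distrib)
  moreover have "0 < d * a" using a_neg d_neg by (simp add: mult_neg_neg)
  ultimately show ?thesis by (simp add: algebra_simps)
qed

lemma Delta_g_nonneg: "0 \<le> Delta_g a b c d"
proof -
  have "(2 * sqrt (d*(a - 1)))^2 \<le> (- (b + c))^2"
    using b_plus_c_le sqrt_d_a_minus_1_pos by (intro power_mono) simp_all
  then have "(2 * sqrt (d*(a - 1)))^2 \<le> (b + c)^2"
    by (simp only: power2_minus)
  moreover have "(2 * sqrt (d*(a - 1)))^2 = 4 * (d*(a - 1))"
    using sqrt_d_a_minus_1_pos by (simp add: power_mult_distrib)
  ultimately show ?thesis by (simp add: Delta_g_def algebra_simps)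
qed

lemma g_factor: "x^2 - (a*x + b)*x - (c*x + d) = (1 - a) * (x - gm) * (x - gp)"
proof -
  have "gm + gp = 2 * (b + c) / (2 * (1 - a))"
    unfolding xg_minus_def xg_plus_def add_divide_distrib[symmetric] by simp
  then have sum: "gm + gp = (b + c) / (1 - a)"
    by (metis mult_divide_mult_cancel_left_if zero_neq_numeral)
  have "gm * gp = ((b + c)^2 - Delta_g a b c d) / (2 * (1 - a))^2"
    using Delta_g_nonneg by (simp add: xg_minus_def xg_plus_def power2_eq_square algebra_simps)
  also have "\<dots> = (4 * (1 - a) * (- d)) / (4 * (1 - a) * (1 - a))"
    by (simp add: Delta_g_def power2_eq_square algebra_simps)
  also have "\<dots> = - d / (1 - a)"
    using a_neg by (intro nonzero_mult_divide_mult_cancel_left) simp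
  finally have prod: "gm * gp = - d / (1 - a)" .
  have "(1 - a) * (x - gm) * (x - gp) = (1 - a)*x^2 - ((1 - a) * (gm + gp))*x + (1 - a) * (gm * gp)"
    by (simp add: algebra_simps power2_eq_square)
  also have "\<dots> = (1 - a)*x^2 - (b + c)*x - d"
    using sum prod a_neg by simp
  finally show ?thesis by (simp add: algebra_simps power2_eq_square)
qed

lemma g_pos: "xm < x \<Longrightarrow> x < xp \<Longrightarrow> 0 < x^2 - (a*x + b)*x - (c*x + d)"
proof -
  assume "xm < x" "x < xp"
  then have "(a*x + b)^2 + 4*(c*x + d) < 0"
    unfolding Delta_factor using a_neg by (simp add: mult_pos_neg)
  moreover have "4 * (x^2 - (a*x + b)*x - (c*x + d)) = (2*x - (a*x + b))^2 - ((a*x + b)^2 + 4*(c*x + d))"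
    by (simp add: algebra_simps power2_eq_square)
  ultimately show ?thesis by (smt (verit) zero_le_power2)
qed

lemma gm_le_gp: "gm \<le> gp"
  using a_neg Delta_g_nonneg by (auto simp: xg_minus_def xg_plus_def intro!: divide_right_mono)

lemma gp_neg: "gp < 0"
proof -
  have "Delta_g a b c d < (b + c)^2"
    using a_neg d_neg by (simp add: Delta_g_def mult_neg_pos)
  then have "sqrt (Delta_g a b c d) < - (b + c)"
    using b_plus_c_le sqrt_d_a_minus_1_pos by (smt (verit) real_less_lsqrt power2_minus Delta_g_nonneg)
  then show ?thesis using a_neg by (simp add: xg_plus_def divide_neg_pos)
qed

lemma xA_less_gp: "xA < gp"
proof -
  have "a*c < 0" "b*(2 - a) < 0"
    using a_neg b_neg c_pos by (simp_all add: mult_neg_pos)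
  then have "xA < (b + c) / (2*(1 - a))"
    using a_neg by (simp add: x_A_def field_simps)
  also have "\<dots> \<le> gp"
    using a_neg Delta_g_nonneg by (auto simp: xg_plus_def intro!: divide_right_mono)
  finally show ?thesis .
qed

lemma xp_le_gm: "xp \<le> gm"
proof -
  have "0 < (1 - a) * ((xA - gm) * (xA - gp))"
    using g_pos[OF xm_less_xA xA_less_xp] by (simp add: g_factor mult.assoc)
  then have "0 < (xA - gm) * (xA - gp)"
    using a_neg by (simp add: zero_less_mult_iff)
  then have "xA < gm"
    using xA_less_gp by (simp add: zero_less_mult_iff)
  show ?thesis
  proof (rule ccontr)
    assume "\<not> xp \<le> gm"
    then have "0 < gm^2 - (a*gm + b)*gm - (c*gm + d)"
      using \<open>xA < gm\<close> xm_less_xA by (intro g_pos) auto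
    then show False by (simp add: g_factor)
  qed
qed

lemma xp_neg: "xp < 0"
  using xp_le_gm gm_le_gp gp_neg by simp

lemma h_xp_pos_iff: "0 < (2 - a)*xp - b \<longleftrightarrow> Delta_g a b c d < DeltaDelta a b c d"
proof -
  define s where "s = sqrt (DeltaDelta a b c d)"
  define k where "k = a*b + (2 - a)*c"
  have "0 < a*b" "0 < (2 - a)*c" using a_neg b_neg c_pos by (simp_all add: mult_neg_neg)
  then have "0 < k" by (simp add: k_def)
  have "0 < s" using c_less_sqrt_DeltaDelta c_pos unfolding s_def by linarith
  have "(2 - a)*xp - b = 2 * ((2 - a)*s - k) / a^2"
    using a_neg by (simp add: xDelta_plus_def s_def k_def field_simps power2_eq_square)
  then have "0 < (2 - a)*xp - b \<longleftrightarrow> k < (2 - a)*s"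
    using a_neg by (simp add: zero_less_divide_iff)
  also have "\<dots> \<longleftrightarrow> k^2 < ((2 - a)*s)^2"
    using \<open>0 < k\<close> \<open>0 < s\<close> a_neg power_mono_iff[of "(2 - a)*s" k 2]
    by (simp add: not_le[symmetric])
  also have "((2 - a)*s)^2 - k^2 = a^2 * (DeltaDelta a b c d - Delta_g a b c d)"
    using sqrt_DeltaDelta_squared
    by (simp add: s_def k_def DeltaDelta_def Delta_g_def power2_eq_square algebra_simps)
  then have "k^2 < ((2 - a)*s)^2 \<longleftrightarrow> Delta_g a b c d < DeltaDelta a b c d"
    using a_neg by (smt (verit) zero_less_mult_iff zero_less_power2)
  finally show ?thesis .
qed

lemma root_count_condition_iff:
  fixes n :: nat
  assumes "1 \<le> n"
  shows "0 \<le> (a*xp + b) + n * ((2 - a)*xp - b) \<longleftrightarrow>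
    Delta_g a b c d < DeltaDelta a b c d \<and> n_plus a b c d \<le> n"
proof -
  have "n_plus a b c d = - (a*xp + b) / ((2 - a)*xp - b)"
    by (simp add: n_plus_def Let_def)
  moreover have "0 \<le> (a*xp + b) + n * ((2 - a)*xp - b) \<Longrightarrow> 0 < (2 - a)*xp - b"
    using A_xp_neg assms by (smt (verit) mult_nonneg_nonpos of_nat_0_le_iff)
  ultimately show ?thesis
    unfolding h_xp_pos_iff[symmetric] by (auto simp: divide_le_eq algebra_simps)
qed

text \<open>At a zero of \<open>angle_gap n j\<close> we have \<open>A(x) = 2\<rho> cos(j\<pi>/n)\<close> with \<open>\<rho>\<^sup>2 = -B(x)\<close>, hence
  \<open>W\<^sub>n(x) = (-1)\<^sup>j \<rho>\<^sup>n\<close> by the trigonometric closed form.\<close>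

definition angle_gap :: "nat \<Rightarrow> nat \<Rightarrow> real \<Rightarrow> real" where
  "angle_gap n j x = a*x + b - 2 * sqrt (- (c*x + d)) * cos (j*pi/n)"

lemma continuous_on_angle_gap: "continuous_on S (angle_gap n j)"
  unfolding angle_gap_def by (intro continuous_intros)

lemma angle_gap_less_Suc:
  assumes "x \<le> xp" "Suc j \<le> n"
  shows "angle_gap n j x < angle_gap n (Suc j) x"
proof -
  have "0 < sqrt (- (c*x + d))" using B_neg[OF assms(1)] by simp
  moreover have "cos (Suc j * pi / n) < cos (j * pi / n)"
    using assms(2) by (intro cos_multiple_pi_div_strict_decreasing) simp_all
  ultimately show ?thesis by (simp add: angle_gap_def)
qed

lemma sign_W_at_angle_gap_zero:
  assumes "x \<le> xp" "angle_gap n j x = 0" "1 \<le> j" "j < n"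
  shows "0 < (-1)^j * poly (W a b c d n) x"
proof (rule sign_W_at_angle)
  show "0 < sqrt (- (c*x + d))" "(sqrt (- (c*x + d)))^2 = - (c*x + d)"
    using B_neg[OF assms(1)] by simp_all
  show "a*x + b = 2 * sqrt (- (c*x + d)) * cos (j*pi/n)"
    using assms(2) by (simp add: angle_gap_def)
qed fact+

lemma angle_gap_xm_pos: "0 < j \<Longrightarrow> j < n \<Longrightarrow> 0 < angle_gap n j xm"
proof -
  assume "0 < j" "j < n"
  then have "cos (j*pi/n) < 1"
    using cos_multiple_pi_div_strict_decreasing[of 0 j n] by simp
  moreover have "angle_gap n j xm = (a*xm + b) * (1 - cos (j*pi/n))"
    unfolding angle_gap_def sqrt_neg_B_xm by (simp add: algebra_simps)
  ultimately show ?thesis using A_xm_pos by simp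
qed

lemma angle_gap_xp_neg: "0 < j \<Longrightarrow> j < n \<Longrightarrow> angle_gap n j xp < 0"
proof -
  assume "0 < j" "j < n"
  then have "-1 < cos (j*pi/n)"
    using cos_multiple_pi_div_strict_decreasing[of j n n] by simp
  moreover have "angle_gap n j xp = (a*xp + b) * (1 + cos (j*pi/n))"
    unfolding angle_gap_def sqrt_neg_B_xp by (simp add: field_simps)
  ultimately show ?thesis using A_xp_neg by (simp add: mult_neg_pos)
qed

lemma angle_gap_xA_neg: "2*j < n \<Longrightarrow> angle_gap n j xA < 0"
proof -
  assume "2*j < n"
  then have "0 \<le> j*pi/n" "j*pi/n < pi/2" by (auto simp: field_simps)
  then have "cos (j*pi/n) > 0" using pi_gt_zero by (intro cos_gt_zero_pi) linarith+
  then show ?thesis using B_neg[of xA] xA_less_xp by (simp add: angle_gap_def A_xA)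
qed

lemma angle_gap_xA_pos: "n < 2*j \<Longrightarrow> j \<le> n \<Longrightarrow> 0 < angle_gap n j xA"
proof -
  assume "n < 2*j" "j \<le> n"
  then have "cos (j*pi/n) < cos (pi/2)"
    by (intro cos_monotone_0_pi) (auto simp: field_simps)
  then show ?thesis using B_neg[of xA] xA_less_xp by (simp add: angle_gap_def A_xA mult_pos_neg)
qed

lemma sign_W_xA:
  assumes "1 \<le> n"
  shows "0 < (-1)^((n + 1) div 2) * poly (W a b c d n) xA"
proof -
  define k where "k = n div 2"
  have "0 < - (c*xA + d)" using B_neg[of xA] xA_less_xp by simp
  then have pos: "0 < (-1)^k * (c*xA + d)^k"
    by (simp add: power_minus[symmetric])
  have "xA < 0" using xA_less_xp xp_neg by simp
  have "n = 2*k \<or> n = 2*k + 1" unfolding k_def by presburger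
  then consider "n = 2*k" | "n = 2*k + 1" by blast
  then show ?thesis
  proof cases
    case 1
    then show ?thesis using poly_W_at_zero_of_A[OF A_xA, of c d k] pos by simp
  next
    case 2
    then have "(-1)^((n + 1) div 2) * poly (W a b c d n) xA = (- xA) * ((-1)^k * (c*xA + d)^k)"
      using poly_W_at_zero_of_A[OF A_xA, of c d k] by simp
    then show ?thesis using pos \<open>xA < 0\<close> by (simp add: mult_neg_pos)
  qed
qed

lemma sign_W_xp_iff:
  "0 < (-1)^n * poly (W a b c d n) xp \<longleftrightarrow> (a*xp + b) + n * ((2 - a)*xp - b) < 0"
proof -
  define u where "u = (a*xp + b) / 2"
  define V where "V = (-1)^n * poly (W a b c d n) xp"
  have "u < 0" using A_xp_neg by (simp add: u_def)
  have "c*xp + d = - (u^2)"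
    using Delta_xp by (simp add: u_def power_divide algebra_simps)
  then have "u * poly (W a b c d n) xp = u^n * (u + n * (xp - u))"
    by (intro poly_W_double_root) (simp add: u_def)
  then have "u * V = (- u)^n * (u + n * (xp - u))"
    unfolding V_def power_minus[of u] by (metis mult.assoc mult.left_commute)
  also have "u + n * (xp - u) = ((a*xp + b) + n * ((2 - a)*xp - b)) / 2"
    by (simp add: u_def field_simps)
  finally have uV: "u * V = (- u)^n * (((a*xp + b) + n * ((2 - a)*xp - b)) / 2)" .
  have "0 < V \<longleftrightarrow> u * V < 0"
    using \<open>u < 0\<close> by (simp add: mult_less_0_iff)
  also have "\<dots> \<longleftrightarrow> (a*xp + b) + n * ((2 - a)*xp - b) < 0"
    unfolding uV using \<open>u < 0\<close> by (simp add: mult_less_0_iff)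
  finally show ?thesis by (simp add: V_def)
qed

lemma sign_W_at_g_root:
  assumes "x = gm \<or> x = gp"
  shows "0 < (-1)^n * poly (W a b c d n) x"
proof -
  have "x^2 - (a*x + b)*x - (c*x + d) = 0" using assms by (auto simp: g_factor)
  then have "poly (W a b c d n) x = x^n" by (intro poly_W_eq_power) simp
  moreover have "x < 0" using assms gm_le_gp gp_neg by auto
  ultimately show ?thesis by (simp add: power_minus[symmetric])
qed

lemma alternating_points:
  assumes "2 \<le> n"
  defines "K \<equiv> (n + 1) div 2"
  obtains P where "\<And>j. 1 \<le> j \<Longrightarrow> j < n \<Longrightarrow> P j < P (Suc j)"
    and "\<And>j. 1 \<le> j \<Longrightarrow> j \<le> n \<Longrightarrow> 0 < (-1)^j * poly (W a b c d n) (P j)"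
    and "\<And>j. 1 \<le> j \<Longrightarrow> j < K \<Longrightarrow> xm < P j \<and> P j < xA"
    and "P K = xA"
    and "\<And>j. K < j \<Longrightarrow> j < n \<Longrightarrow> xA < P j \<and> P j < xp"
    and "P n = gm"
proof -
  have K: "1 \<le> K" "K < n" "n \<le> 2*K" "2*K \<le> n + 1" using assms(1) unfolding K_def by auto
  obtain pL where pL: "\<And>j. 1 \<le> j \<Longrightarrow> j < K \<Longrightarrow> xm < pL j \<and> pL j < xA \<and> angle_gap n j (pL j) = 0"
    and pL_less: "\<And>j. 1 \<le> j \<Longrightarrow> Suc j < K \<Longrightarrow> pL j < pL (Suc j)"
  proof (rule ascending_zeros[of xm xA "angle_gap n" 1 K])
    show "0 < angle_gap n k xm" if "1 \<le> k" "k < K" for k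
      using that K by (intro angle_gap_xm_pos) auto
    show "angle_gap n k xA < 0" if "1 \<le> k" "k < K" for k
      using that K by (intro angle_gap_xA_neg) auto
    show "0 < angle_gap n (Suc k) x" if "1 \<le> k" "Suc k < K" "xm < x" "x < xA" "angle_gap n k x = 0" for k x
      using angle_gap_less_Suc[of x k n] that K xA_less_xp by simp
  qed (use xm_less_xA continuous_on_angle_gap in auto)
  obtain pR where pR: "\<And>j. K + 1 \<le> j \<Longrightarrow> j < n \<Longrightarrow> xA < pR j \<and> pR j < xp \<and> angle_gap n j (pR j) = 0"
    and pR_less: "\<And>j. K + 1 \<le> j \<Longrightarrow> Suc j < n \<Longrightarrow> pR j < pR (Suc j)"
  proof (rule ascending_zeros[of xA xp "angle_gap n" "K + 1" n])
    show "0 < angle_gap n k xA" if "K + 1 \<le> k" "k < n" for k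
      using that K by (intro angle_gap_xA_pos) auto
    show "angle_gap n k xp < 0" if "K + 1 \<le> k" "k < n" for k
      using that K by (intro angle_gap_xp_neg) auto
    show "0 < angle_gap n (Suc k) x" if "K + 1 \<le> k" "Suc k < n" "xA < x" "x < xp" "angle_gap n k x = 0" for k x
      using angle_gap_less_Suc[of x k n] that by simp
  qed (use xA_less_xp continuous_on_angle_gap in auto)
  define P where "P j = (if j < K then pL j else if j = K then xA else if j < n then pR j else gm)" for j
  show thesis
  proof
    show "P j < P (Suc j)" if "1 \<le> j" "j < n" for j
      using that pL[of j] pL_less[of j] pR[of j] pR[of "Suc j"] pR_less[of j] K xA_less_xp xp_le_gm
      by (auto simp: P_def less_Suc_eq)
    show "0 < (-1)^j * poly (W a b c d n) (P j)" if j: "1 \<le> j" "j \<le> n" for j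
    proof -
      have "j < K \<or> j = K \<or> (K < j \<and> j < n) \<or> j = n" using j by linarith
      then consider "j < K" | "j = K" | "K < j" "j < n" | "j = n" by blast
      then show ?thesis
      proof cases
        case 1
        then show ?thesis using pL[of j] j K xA_less_xp
          by (auto simp: P_def intro!: sign_W_at_angle_gap_zero)
      next
        case 2
        then show ?thesis using sign_W_xA K by (simp add: P_def K_def)
      next
        case 3
        then show ?thesis using pR[of j] j K
          by (auto simp: P_def intro!: sign_W_at_angle_gap_zero)
      next
        case 4
        then show ?thesis using sign_W_at_g_root K by (simp add: P_def)
      qed
    qed
    show "xm < P j \<and> P j < xA" if "1 \<le> j" "j < K" for j
      using pL that by (simp add: P_def)
    show "P K = xA" by (simp add: P_def)
    show "xA < P j \<and> P j < xp" if "K < j" "j < n" for j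
      using pR that by (simp add: P_def)
    show "P n = gm" using K by (simp add: P_def)
  qed
qed

lemma located_roots:
  assumes "2 \<le> n"
  defines "K \<equiv> (n + 1) div 2"
  obtains R where "\<And>J. nroots_in (W a b c d n) J = card {j \<in> {1..n}. R j \<in> J}"
    and "real_rooted (W a b c d n)"
    and "\<And>j. 1 \<le> j \<Longrightarrow> j < K \<Longrightarrow> xm < R j \<and> R j < xA"
    and "\<And>j. K \<le> j \<Longrightarrow> j < n \<Longrightarrow> xA < R j \<and> R j < gm"
    and "gp < R n \<and> R n < 0"
    and "\<And>j. 1 \<le> j \<Longrightarrow> Suc j < n \<Longrightarrow> R j < xp"
    and "xp \<le> R (n - 1) \<longleftrightarrow> 0 \<le> (a*xp + b) + n * ((2 - a)*xp - b)"
proof -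
  have K: "1 \<le> K" "K < n" using assms unfolding K_def by auto
  obtain P where P_less: "\<And>j. 1 \<le> j \<Longrightarrow> j < n \<Longrightarrow> P j < P (Suc j)"
    and P_sign: "\<And>j. 1 \<le> j \<Longrightarrow> j \<le> n \<Longrightarrow> 0 < (-1)^j * poly (W a b c d n) (P j)"
    and P_left: "\<And>j. 1 \<le> j \<Longrightarrow> j < K \<Longrightarrow> xm < P j \<and> P j < xA"
    and P_K: "P K = xA"
    and P_right: "\<And>j. K < j \<Longrightarrow> j < n \<Longrightarrow> xA < P j \<and> P j < xp"
    and P_n: "P n = gm"
    using alternating_points[OF assms(1)] unfolding K_def by blast
  have "0 < (-1)^n * poly (W a b c d n) gp" "(-1)^n * poly (W a b c d n) 0 < 0"
    using sign_W_at_g_root[of gp n] sign_W_at_zero b_neg d_neg b_squared_plus_4d_pos assms by auto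
  moreover have "continuous_on {gp..0} (poly (W a b c d n))" by (intro continuous_intros)
  ultimately obtain r where r: "gp < r" "r < 0" "poly (W a b c d n) r = 0"
    using zero_between_opposite_signs[OF gp_neg] by blast
  have "P n < r" using P_n gm_le_gp r by simp
  have "1 \<le> n" "degree (W a b c d n) = n" using assms a_neg degree_W by auto
  from interlaced_roots[OF this P_less P_sign \<open>P n < r\<close> r(3)]
  obtain R where R_between: "\<And>j. 1 \<le> j \<Longrightarrow> j < n \<Longrightarrow> P j < R j \<and> R j < P (Suc j)"
    and "R n = r" and count: "\<And>J. nroots_in (W a b c d n) J = card {j \<in> {1..n}. R j \<in> J}"
    and real_rooted: "real_rooted (W a b c d n)"
    and R_less_iff: "\<And>j x. 1 \<le> j \<Longrightarrow> j < n \<Longrightarrow> P j \<le> x \<Longrightarrow> x \<le> P (Suc j) \<Longrightarrow>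
      R j < x \<longleftrightarrow> (-1)^j * poly (W a b c d n) x < 0"
    by blast
  show thesis
  proof
    show "xm < R j \<and> R j < xA" if "1 \<le> j" "j < K" for j
      using R_between[of j] P_left[of j] P_left[of "Suc j"] P_K that K by (cases "Suc j = K") auto
    show "xA < R j \<and> R j < gm" if "K \<le> j" "j < n" for j
      using R_between[of j] P_right[of j] P_right[of "Suc j"] P_K P_n that K xp_le_gm
      by (cases "j = K"; cases "Suc j = n") auto
    show "R j < xp" if "1 \<le> j" "Suc j < n" for j
      using R_between[of j] P_left[of "Suc j"] P_right[of "Suc j"] P_K that xA_less_xp
      by (cases "Suc j < K"; cases "Suc j = K") auto
    have "P (n - 1) \<le> xp"
      using P_K P_right[of "n - 1"] K xA_less_xp by (cases "K < n - 1"; cases "n - 1 = K") auto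
    then have "R (n - 1) < xp \<longleftrightarrow> (-1)^(n - 1) * poly (W a b c d n) xp < 0"
      using R_less_iff[of "n - 1" xp] P_n xp_le_gm assms by simp
    also have "\<dots> \<longleftrightarrow> 0 < (-1)^n * poly (W a b c d n) xp"
      using minus_one_power_mult_pred[of n "poly (W a b c d n) xp"] assms by linarith
    finally show "xp \<le> R (n - 1) \<longleftrightarrow> 0 \<le> (a*xp + b) + n * ((2 - a)*xp - b)"
      unfolding sign_W_xp_iff by linarith
  qed (use \<open>R n = r\<close> r count real_rooted in simp_all)
qed

lemma root_counts_ge_2:
  assumes "2 \<le> n"
  shows "real_rooted (W a b c d n)
    \<and> nroots_in (W a b c d n) {xm<..<xA} = (n - 1) div 2
    \<and> nroots_in (W a b c d n) ({xA<..<xp} \<union> {xp..<gm}) = n div 2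
    \<and> nroots_in (W a b c d n) {gp..0} = 1
    \<and> nroots_in (W a b c d n) {xp..<gm} = (if 0 \<le> (a*xp + b) + n * ((2 - a)*xp - b) then 1 else 0)"
proof -
  define K where "K = (n + 1) div 2"
  have K: "1 \<le> K" "K < n" "K - 1 = (n - 1) div 2" "n - K = n div 2"
    using assms unfolding K_def by auto
  obtain R where count: "\<And>J. nroots_in (W a b c d n) J = card {j \<in> {1..n}. R j \<in> J}"
    and "real_rooted (W a b c d n)"
    and R_left: "\<And>j. 1 \<le> j \<Longrightarrow> j < K \<Longrightarrow> xm < R j \<and> R j < xA"
    and R_mid: "\<And>j. K \<le> j \<Longrightarrow> j < n \<Longrightarrow> xA < R j \<and> R j < gm"
    and R_n: "gp < R n \<and> R n < 0"
    and R_below_xp: "\<And>j. 1 \<le> j \<Longrightarrow> Suc j < n \<Longrightarrow> R j < xp"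
    and R_J3_iff: "xp \<le> R (n - 1) \<longleftrightarrow> 0 \<le> (a*xp + b) + n * ((2 - a)*xp - b)"
    using located_roots[OF assms] unfolding K_def by blast
  have order: "xm < xA" "xA < xp" "xp \<le> gm" "gm \<le> gp"
    using xm_less_xA xA_less_xp xp_le_gm gm_le_gp .
  have R_range: "(j < K \<and> xm < R j \<and> R j < xA) \<or> (K \<le> j \<and> j < n \<and> xA < R j \<and> R j < gm)
      \<or> (j = n \<and> gp < R j \<and> R j < 0)" if "j \<in> {1..n}" for j
    using R_left[of j] R_mid[of j] R_n that by (cases "j < K"; cases "j = n") auto
  have "R j \<in> {xm<..<xA} \<longleftrightarrow> j < K" if "j \<in> {1..n}" for j
    using R_range[OF that] order K by auto
  then have "{j \<in> {1..n}. R j \<in> {xm<..<xA}} = {j \<in> {1..n}. j < K}"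
    by blast
  also have "\<dots> = {1..<K}"
    using K by auto
  finally have count_left: "{j \<in> {1..n}. R j \<in> {xm<..<xA}} = {1..<K}" .
  have "R j \<in> {xA<..<xp} \<union> {xp..<gm} \<longleftrightarrow> K \<le> j \<and> j < n" if "j \<in> {1..n}" for j
    using R_range[OF that] order K by auto
  then have "{j \<in> {1..n}. R j \<in> {xA<..<xp} \<union> {xp..<gm}} = {j \<in> {1..n}. K \<le> j \<and> j < n}"
    by blast
  also have "\<dots> = {K..<n}"
    using K by auto
  finally have count_mid: "{j \<in> {1..n}. R j \<in> {xA<..<xp} \<union> {xp..<gm}} = {K..<n}" .
  have "R j \<in> {gp..0} \<longleftrightarrow> j = n" if "j \<in> {1..n}" for j
    using R_range[OF that] order K by auto
  then have "{j \<in> {1..n}. R j \<in> {gp..0}} = {j \<in> {1..n}. j = n}"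
    by blast
  also have "\<dots> = {n}"
    using K by auto
  finally have count_last: "{j \<in> {1..n}. R j \<in> {gp..0}} = {n}" .
  have "R j \<in> {xp..<gm} \<longleftrightarrow> j = n - 1 \<and> xp \<le> R (n - 1)" if "j \<in> {1..n}" for j
    using R_range[OF that] R_below_xp[of j] order K that by (cases "j = n - 1"; cases "Suc j < n") auto
  then have "{j \<in> {1..n}. R j \<in> {xp..<gm}} = {j \<in> {1..n}. j = n - 1 \<and> xp \<le> R (n - 1)}"
    by blast
  also have "\<dots> = (if xp \<le> R (n - 1) then {n - 1} else {})"
    using K by auto
  finally have count_J3: "{j \<in> {1..n}. R j \<in> {xp..<gm}} = (if xp \<le> R (n - 1) then {n - 1} else {})" .
  show ?thesis
    using \<open>real_rooted (W a b c d n)\<close> K R_J3_iff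
    unfolding count count_left count_mid count_last count_J3 by simp
qed

lemma root_counts_1:
  "real_rooted (W a b c d 1)
    \<and> nroots_in (W a b c d 1) {xm<..<xA} = 0
    \<and> nroots_in (W a b c d 1) ({xA<..<xp} \<union> {xp..<gm}) = 0
    \<and> nroots_in (W a b c d 1) {gp..0} = 1
    \<and> nroots_in (W a b c d 1) {xp..<gm} = 0
    \<and> (a*xp + b) + 1 * ((2 - a)*xp - b) < 0"
proof -
  have W1: "W a b c d 1 = [:0, 1:]" by simp
  have roots: "[:0, 1:] \<noteq> (0 :: real poly)" "finite {0 :: real}" "card {0 :: real} = degree [:0, 1 :: real:]"
    "\<And>x. x \<in> {0 :: real} \<Longrightarrow> poly [:0, 1:] x = 0"
    by simp_all
  have "xA < 0" "xp < 0" "gm < 0" using xA_less_xp xp_neg xp_le_gm gm_le_gp gp_neg by auto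
  moreover note nroots_in_eq_card_inter[OF roots] real_rooted_if_card_eq_degree[OF roots]
  ultimately show ?thesis
    unfolding W1 using gp_neg by (auto simp: algebra_simps)
qed

lemma root_counts:
  assumes "1 \<le> n"
  shows "real_rooted (W a b c d n)
    \<and> nroots_in (W a b c d n) {xm<..<xA} = (n - 1) div 2
    \<and> nroots_in (W a b c d n) ({xA<..<xp} \<union> {xp..<gm}) = n div 2
    \<and> nroots_in (W a b c d n) {gp..0} = 1
    \<and> nroots_in (W a b c d n) {xp..<gm} = (if 0 \<le> (a*xp + b) + n * ((2 - a)*xp - b) then 1 else 0)"
proof (cases "n = 1")
  case True
  then show ?thesis using root_counts_1 by simp
next
  case False
  then show ?thesis using root_counts_ge_2 assms by simp
qed

end

theorem theorem3p2:
  fixes a b c d :: real and n :: nat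
  assumes "a < 0" and "b < 0" and "d < 0" and "0 < c"
    and "c \<le> c_minus a b d"
    and "n \<ge> 1"
  shows "real_rooted (W a b c d n)
    \<and> nroots_in (W a b c d n) {xDelta_minus a b c d <..< x_A a b} = (n - 1) div 2
    \<and> nroots_in (W a b c d n)
        ({x_A a b <..< xDelta_plus a b c d} \<union> {xDelta_plus a b c d ..< xg_minus a b c d})
        = n div 2
    \<and> nroots_in (W a b c d n) {xg_plus a b c d .. 0} = 1
    \<and> nroots_in (W a b c d n) {xDelta_plus a b c d ..< xg_minus a b c d}
        = (if DeltaDelta a b c d > Delta_g a b c d \<and> real n \<ge> n_plus a b c d then 1 else 0)"
proof -
  interpret c_le_c_minus a b c d
    using assms by unfold_locales
  show ?thesis
    using root_counts[OF assms(6)] root_count_condition_iff[OF assms(6)] by simp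
qed

end
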